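(* Let $\mathcal X$ be finite with $N=|\mathcal X|\ge2$, $c\in(0,1/N]$, $\varepsilon\ge 0$, $l\in\{1,\dots,N-1\}$, and let $K$ be a kernel from $\mathcal X$ to a finite set $\mathcal Y$ with $C(K,\mathcal Q_{\mathcal X}(c))\le\varepsilon$. If $\varepsilon<-\log\big((N-l)c\big)$, then for every $y\in\mathcal Y$ such that $K_{Y|X=x}(y)>0$ for some $x$, the number of $x\in\mathcal X$ with $K_{Y|X=x}(y)=0$ is at most $l-1$.
   Context: A kernel $K$ is a row-stochastic matrix with entries $K_{Y|X=x}(y)$; $(K\circ P_X)(y)=\sum_x K_{Y|X=x}(y)P_X(x)$. For full-support $P_X$ and $(K\circ P_X)(y)>0$, $\ell_{K\times P_X}(X\to y)=\log\frac{\max_{x}K_{Y|X=x}(y)}{(K\circ P_X)(y)}$ (natural log). $\mathcal Q_{\mathcal X}(c)=\{P_X\in\mathcal P(\mathcal X):\min_x P_X(x)\ge c\}$, and $C(K,\mathcal P)=\sup_{P_X\in\mathcal P}\sup_{y:(K\circ P_X)(y)>0}\ell_{K\times P_X}(X\to y)$. *)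

theory Defs
  imports "HOL-Analysis.Analysis"
begin

text \<open>A kernel from a finite type 'x to a finite type 'y: K x y = K_{Y|X=x}(y), row-stochastic.\<close>
definition is_kernel :: "('x::finite \<Rightarrow> 'y::finite \<Rightarrow> real) \<Rightarrow> bool" where
  "is_kernel K \<longleftrightarrow> (\<forall>x y. 0 \<le> K x y) \<and> (\<forall>x. (\<Sum>y\<in>UNIV. K x y) = 1)"

definition is_dist :: "('x::finite \<Rightarrow> real) \<Rightarrow> bool" where
  "is_dist P \<longleftrightarrow> (\<forall>x. 0 \<le> P x) \<and> (\<Sum>x\<in>UNIV. P x) = 1"

definition push :: "('x::finite \<Rightarrow> 'y \<Rightarrow> real) \<Rightarrow> ('x \<Rightarrow> real) \<Rightarrow> 'y \<Rightarrow> real" where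
  "push K P y = (\<Sum>x\<in>UNIV. K x y * P x)"

definition leak :: "('x::finite \<Rightarrow> 'y \<Rightarrow> real) \<Rightarrow> ('x \<Rightarrow> real) \<Rightarrow> 'y \<Rightarrow> real" where
  "leak K P y = ln (Max (range (\<lambda>x. K x y)) / push K P y)"

definition Qset :: "real \<Rightarrow> ('x::finite \<Rightarrow> real) set" where
  "Qset c = {P. is_dist P \<and> Min (range P) \<ge> c}"

definition cap :: "('x::finite \<Rightarrow> 'y \<Rightarrow> real) \<Rightarrow> ('x \<Rightarrow> real) set \<Rightarrow> ereal" where
  "cap K PP = (SUP Py \<in> {(P, y). P \<in> PP \<and> push K P y > 0}. ereal (leak K (fst Py) (snd Py)))"

end

theory Submission
  imports Defs
begin

(* If the zero set Z of y has at least l points, take the distribution P with mass c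
   outside Z and the remaining mass spread over Z; it lies in Q(c) because N c \<le> 1.
   Then (K o P)(y) = c * (sum of K(y|x) over x outside Z) \<le> (N - l) c max_x K(y|x),
   so the leakage at y is at least -ln((N - l) c) > \<epsilon>. *)

definition dist_spread_on :: "'x::finite set \<Rightarrow> real \<Rightarrow> 'x \<Rightarrow> real" where
  "dist_spread_on Z c x = (if x \<in> Z then (1 - real (card (- Z)) * c) / real (card Z) else c)"

lemma sum_dist_spread_on:
  fixes Z :: "'x::finite set"
  assumes "Z \<noteq> {}"
  shows "(\<Sum>x\<in>UNIV. dist_spread_on Z c x) = 1"
proof -
  have "(\<Sum>x\<in>UNIV. dist_spread_on Z c x)
      = (\<Sum>x\<in>Z. dist_spread_on Z c x) + (\<Sum>x\<in>- Z. dist_spread_on Z c x)"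
    by (simp add: sum.union_disjoint[symmetric] Compl_partition)
  also have "\<dots> = (1 - real (card (- Z)) * c) + real (card (- Z)) * c"
    using assms by (simp add: dist_spread_on_def)
  finally show ?thesis by simp
qed

lemma dist_spread_on_ge:
  fixes Z :: "'x::finite set"
  assumes "Z \<noteq> {}" and "real CARD('x) * c \<le> 1"
  shows "c \<le> dist_spread_on Z c x"
proof -
  have "card Z + card (- Z) = CARD('x)"
    using card_mono[of UNIV Z] by (simp add: Compl_eq_Diff_UNIV card_Diff_subset)
  hence "real (card Z) * c \<le> 1 - real (card (- Z)) * c"
    using assms(2) by (metis of_nat_add distrib_right le_diff_eq)
  moreover have "0 < real (card Z)"
    using assms(1) by (simp add: card_gt_0_iff)
  ultimately show ?thesis
    by (simp add: dist_spread_on_def pos_le_divide_eq mult.commute)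
qed

lemma dist_spread_on_in_Qset:
  fixes Z :: "'x::finite set"
  assumes "Z \<noteq> {}" and "0 \<le> c" and "real CARD('x) * c \<le> 1"
  shows "dist_spread_on Z c \<in> Qset c"
  using dist_spread_on_ge[OF assms(1,3)] sum_dist_spread_on[OF assms(1)] assms(2)
  unfolding Qset_def is_dist_def by (auto intro: order_trans simp: Min_ge_iff)

lemma push_dist_spread_on_zeros:
  assumes "Z = {x. K x y = 0}"
  shows "push K (dist_spread_on Z c) y = c * (\<Sum>x\<in>- Z. K x y)"
proof -
  have "push K (dist_spread_on Z c) y
      = (\<Sum>x\<in>Z. K x y * dist_spread_on Z c x) + (\<Sum>x\<in>- Z. K x y * dist_spread_on Z c x)"
    unfolding push_def by (simp add: sum.union_disjoint[symmetric] Compl_partition)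
  also have "\<dots> = (\<Sum>x\<in>- Z. K x y * c)"
    using assms by (simp add: dist_spread_on_def)
  finally show ?thesis by (simp add: sum_distrib_left mult.commute)
qed

lemma push_dist_spread_on_zeros_pos:
  assumes "Z = {x. K x y = 0}" and "0 < c" and "\<And>x. 0 \<le> K x y" and "0 < K x0 y"
  shows "0 < push K (dist_spread_on Z c) y"
proof -
  have "0 < (\<Sum>x\<in>- Z. K x y)"
    using sum_pos2[of "- Z" x0 "\<lambda>x. K x y"] assms(1,3,4) by simp
  thus ?thesis
    using push_dist_spread_on_zeros[of Z K y c, OF assms(1)] assms(2) by simp
qed

lemma push_dist_spread_on_zeros_le:
  assumes "Z = {x. K x y = 0}" and "0 \<le> c" and "\<And>x. 0 \<le> K x y"
  shows "push K (dist_spread_on Z c) y \<le> real (card (- Z)) * c * Max (range (\<lambda>x. K x y))"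
proof -
  have "(\<Sum>x\<in>- Z. K x y) \<le> real (card (- Z)) * Max (range (\<lambda>x. K x y))"
    using sum_bounded_above[of "- Z" "\<lambda>x. K x y"] by simp
  thus ?thesis
    using push_dist_spread_on_zeros[of Z K y c, OF assms(1)] assms(2) by (simp add: mult_left_mono mult_ac)
qed

lemma leak_ge_of_push_le:
  assumes "0 < b" and "0 < push K P y"
    and "push K P y \<le> b * Max (range (\<lambda>x. K x y))"
  shows "- ln b \<le> leak K P y"
proof -
  define M where "M = Max (range (\<lambda>x. K x y))"
  have "0 < M"
  proof (rule ccontr)
    assume "\<not> 0 < M"
    hence "b * M \<le> 0"
      using assms(1) by (simp add: mult_nonneg_nonpos)
    thus False
      using assms(2,3) unfolding M_def by linarith
  qed
  have "ln (1 / b) \<le> ln (M / push K P y)"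
    using assms \<open>0 < M\<close> by (subst ln_le_cancel_iff) (auto simp: M_def field_simps)
  thus ?thesis
    using assms(1) by (simp add: leak_def M_def ln_div)
qed

lemma leak_le_cap:
  assumes "P \<in> PP" and "0 < push K P y"
  shows "ereal (leak K P y) \<le> cap K PP"
  unfolding cap_def by (rule SUP_upper2[of "(P, y)"]) (use assms in auto)

theorem lemma1:
  fixes K :: "'x::finite \<Rightarrow> 'y::finite \<Rightarrow> real"
    and c \<epsilon> :: real and l :: nat
  assumes "CARD('x) \<ge> 2"
    and "0 < c" and "c \<le> 1 / real CARD('x)"
    and "0 \<le> \<epsilon>"
    and "1 \<le> l" and "l \<le> CARD('x) - 1"
    and "is_kernel K"
    and "cap K (Qset c) \<le> ereal \<epsilon>"
    and "\<epsilon> < - ln (real (CARD('x) - l) * c)"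
  shows "\<forall>y. (\<exists>x. K x y > 0) \<longrightarrow> card {x. K x y = 0} \<le> l - 1"
proof (intro allI impI, rule ccontr)
  fix y
  assume "\<exists>x. K x y > 0" and "\<not> card {x. K x y = 0} \<le> l - 1"
  then obtain x0 where x0: "K x0 y > 0" by blast
  define Z where "Z = {x. K x y = 0}"
  define P where "P = dist_spread_on Z c"
  have "l \<le> card Z"
    using \<open>\<not> card {x. K x y = 0} \<le> l - 1\<close> by (simp add: Z_def)
  hence "Z \<noteq> {}"
    using assms(5) by auto
  have "card (- Z) \<le> CARD('x) - l"
    using \<open>l \<le> card Z\<close> by (simp add: Compl_eq_Diff_UNIV card_Diff_subset)
  have K_nonneg: "\<And>x. 0 \<le> K x y"
    using assms(7) by (simp add: is_kernel_def)
  have "P \<in> Qset c"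
    unfolding P_def using \<open>Z \<noteq> {}\<close> assms(2,3)
    by (intro dist_spread_on_in_Qset) (simp_all add: field_simps)
  have "0 < push K P y"
    unfolding P_def using Z_def assms(2) K_nonneg x0 by (rule push_dist_spread_on_zeros_pos)
  have "0 \<le> Max (range (\<lambda>x. K x y))"
    using K_nonneg[of x0] by (auto simp: Max_ge_iff)
  have "push K P y \<le> real (card (- Z)) * c * Max (range (\<lambda>x. K x y))"
    unfolding P_def using assms(2) K_nonneg
    by (intro push_dist_spread_on_zeros_le[of Z K y c] Z_def) simp_all
  also have "\<dots> \<le> real (CARD('x) - l) * c * Max (range (\<lambda>x. K x y))"
    using \<open>card (- Z) \<le> CARD('x) - l\<close> \<open>0 \<le> Max (range (\<lambda>x. K x y))\<close> assms(2)
    by (intro mult_right_mono) simp_all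
  finally have "push K P y \<le> real (CARD('x) - l) * c * Max (range (\<lambda>x. K x y))" .
  moreover have "0 < real (CARD('x) - l) * c"
    using assms(1,2,6) by simp
  ultimately have "- ln (real (CARD('x) - l) * c) \<le> leak K P y"
    using \<open>0 < push K P y\<close> by (intro leak_ge_of_push_le)
  moreover have "leak K P y \<le> \<epsilon>"
    using order_trans[OF leak_le_cap[OF \<open>P \<in> Qset c\<close> \<open>0 < push K P y\<close>] assms(8)]
    by simp
  ultimately show False
    using assms(9) by linarith
qed

end
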